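(* \[ \sum_{k=1}^{\infty}(-1)^k(4k+1)\frac{(\tfrac{1}{2})_k^3}{k!^3}\sum_{i=1}^{2k}\frac{(-1)^i}{i^2}=\frac{\pi}{12}. \]
   Context: For a complex number $x$ and a nonnegative integer $n$, $(x)_n=\Gamma(x+n)/\Gamma(x)=x(x+1)\cdots(x+n-1)$ denotes the shifted factorial (Pochhammer symbol), with $(x)_0=1$. The series is understood as the limit of its partial sums. *)

theory Defs
  imports "HOL-Analysis.Analysis"
begin

end

theory Submission
  imports Defs "HOL-Real_Asymp.Real_Asymp"
begin

(*
  For |x| <= 1/2 consider the series
    F_m(x) = sum_k (-1)^k (m+1/2+2k)/(m+1/2) (m+1/2)_k (1/2+x)_k (1/2-x)_k / (k! (m+1-x)_k (m+1+x)_k).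
  A WZ pair in (m, k) gives F_0(x) = (prod_{i<M} lambda_i(x)) F_M(x) with
  lambda_i(x) = 1 / (w_{i+1} s_{i+1}(x)), where w_j = 4j^2 / (4j^2 - 1) and s_j(x) = 1 - x^2 / j^2 are
  the factors of the Wallis product for pi/2 and of Euler's product for sin(pi x) / (pi x).
  As F_M(x) -> 1 for M -> oo, this yields F_0(x) = 2x / sin(pi x).

  At x = 0 this is Bauer's series sum_k c_k = 2/pi, c_k = (-1)^k (4k+1) (1/2)_k^3 / k!^3.
  The k-th term of F_0(x) is c_k prod_{j<k} (1 + x^2 psi_j(x)) (psi = ratio_defect), and Abel
  summation against the tails of Bauer's series writes F_0(x) = 2/pi + x^2 Q(x) (Q = quad_quot)
  with Q continuous at 0. Comparing with
  2x / sin(pi x) = 2/pi + pi x^2 / 3 + O(x^4) gives Q(0) = pi/3, while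
  Q(0) = sum_k c_k sum_{j<k} psi_j(0) and sum_{j<k} psi_j(0) = 4 sum_{i=1}^{2k} (-1)^i / i^2.
*)

section \<open>Abel summation and WZ telescoping\<close>

lemma sum_lessThan_by_parts:
  fixes T V :: "nat \<Rightarrow> 'a::ring"
  shows "(\<Sum>k<N. (T k - T (Suc k)) * V k)
       = (\<Sum>k<N. T (Suc k) * (V (Suc k) - V k)) + T 0 * V 0 - T N * V N"
  by (induction N) (simp_all add: algebra_simps)

lemma sums_by_parts:
  fixes T V :: "nat \<Rightarrow> 'a::real_normed_algebra"
  assumes "T \<longlonglongrightarrow> 0" "Bseq V" "summable (\<lambda>k. T (Suc k) * (V (Suc k) - V k))"
  shows "(\<lambda>k. (T k - T (Suc k)) * V k) sums (T 0 * V 0 + (\<Sum>k. T (Suc k) * (V (Suc k) - V k)))"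
proof -
  have "Zfun T sequentially"
    using assms(1) by (simp add: tendsto_Zfun_iff)
  moreover have "Bfun V sequentially"
    using assms(2) by (rule Bseq_conv_Bfun[THEN iffD1])
  ultimately have "Zfun (\<lambda>N. T N * V N) sequentially"
    by (rule bounded_bilinear.Zfun_prod_Bfun[OF bounded_bilinear_mult])
  then have "(\<lambda>N. T N * V N) \<longlonglongrightarrow> 0"
    by (simp add: tendsto_Zfun_iff)
  then have "(\<lambda>N. (\<Sum>k<N. T (Suc k) * (V (Suc k) - V k)) + T 0 * V 0 - T N * V N)
      \<longlonglongrightarrow> (\<Sum>k. T (Suc k) * (V (Suc k) - V k)) + T 0 * V 0 - 0"
    by (intro tendsto_intros summable_LIMSEQ assms(3))
  then show ?thesis
    unfolding sums_def sum_lessThan_by_parts by (simp add: add.commute)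
qed

lemma divide_le_divide_cross:
  fixes a b c d :: "'a::linordered_field"
  assumes "0 < b" "0 < d" "a * d \<le> c * b"
  shows "a / b \<le> c / d"
  using assms by (simp add: divide_simps)

lemma square_le_quarter: "\<bar>x::real\<bar> \<le> 1/2 \<Longrightarrow> x^2 \<le> 1/4"
  using abs_le_square_iff[of x "1/2"] by (simp add: power2_eq_square)

lemma square_lt_succ_square:
  assumes "\<bar>x\<bar> \<le> 1/2"
  shows "x^2 < (real k + 1)^2"
proof -
  have "1 \<le> (real k + 1)^2"
    by (rule one_le_power) simp
  with square_le_quarter[OF assms] show ?thesis
    by linarith
qed

lemma pochhammer_plus_one:
  "a \<noteq> 0 \<Longrightarrow> pochhammer ((a::'a::field) + 1) k = pochhammer a k * (a + of_nat k) / a"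
  using pochhammer_rec[of a k] pochhammer_Suc[of a k] by (simp add: field_simps)

lemma sin_pi_times_nonzero:
  assumes "\<bar>x\<bar> < 1" "x \<noteq> 0"
  shows "sin (pi * x) \<noteq> 0"
proof -
  have "\<bar>pi * x\<bar> < pi"
    using assms(1) by (simp add: abs_mult)
  with assms(2) show ?thesis
    by (simp add: sin_zero_pi_iff)
qed

lemma inverse_squares_sums': "(\<lambda>j. c / (real j + 1)^2) sums (c * pi^2 / 6)"
  using sums_mult[OF inverse_squares_sums, of c] by (simp add: add.commute)

lemma summable_inverse_squares: "summable (\<lambda>j. c / (real j + 1)^2)"
  using sums_summable[OF inverse_squares_sums'] .

lemma continuous_on_suminf_dominated:
  fixes f :: "nat \<Rightarrow> 'a::topological_space \<Rightarrow> 'b::banach"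
  assumes "\<And>n. continuous_on A (f n)" "\<And>n x. x \<in> A \<Longrightarrow> norm (f n x) \<le> M n" "summable M"
  shows "continuous_on A (\<lambda>x. \<Sum>n. f n x)"
proof (rule uniform_limit_theorem)
  show "uniform_limit A (\<lambda>n x. \<Sum>i<n. f i x) (\<lambda>x. \<Sum>n. f n x) sequentially"
    by (rule Weierstrass_m_test[OF assms(2,3)])
  show "\<forall>\<^sub>F n in sequentially. continuous_on A (\<lambda>x. \<Sum>i<n. f i x)"
    using assms(1) by (intro always_eventually allI continuous_on_sum) auto
qed simp

lemma wz_partial_sum_shift:
  fixes F G :: "nat \<Rightarrow> nat \<Rightarrow> 'a::comm_ring_1" and r :: "nat \<Rightarrow> 'a"
  assumes wz: "\<And>m k. F m k - r m * F (Suc m) k = G m (Suc k) - G m k"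
    and G_0: "\<And>m. G m 0 = 0"
  shows "(\<Sum>k<N. F 0 k) = (\<Prod>i<M. r i) * (\<Sum>k<N. F M k) + (\<Sum>j<M. (\<Prod>i<j. r i) * G j N)"
proof (induction M)
  case (Suc M)
  have "(\<Sum>k<N. F M k - r M * F (Suc M) k) = G M N - G M 0"
    by (simp add: wz sum_lessThan_telescope)
  then have "(\<Sum>k<N. F M k) = r M * (\<Sum>k<N. F (Suc M) k) + G M N"
    by (simp add: G_0 sum_subtractf sum_distrib_left algebra_simps)
  with Suc show ?case by (simp add: algebra_simps)
qed simp

lemma wz_sums:
  fixes F G :: "nat \<Rightarrow> nat \<Rightarrow> 'a::real_normed_field" and r :: "nat \<Rightarrow> 'a"
  assumes "\<And>m k. F m k - r m * F (Suc m) k = G m (Suc k) - G m k" "\<And>m. G m 0 = 0"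
    and "summable (F M)" "\<And>j. j < M \<Longrightarrow> (\<lambda>N. G j N) \<longlonglongrightarrow> 0"
  shows "F 0 sums ((\<Prod>i<M. r i) * suminf (F M))"
proof -
  have "(\<lambda>N. (\<Prod>i<M. r i) * (\<Sum>k<N. F M k) + (\<Sum>j<M. (\<Prod>i<j. r i) * G j N))
      \<longlonglongrightarrow> (\<Prod>i<M. r i) * suminf (F M) + (\<Sum>j<M. (\<Prod>i<j. r i) * 0)"
    using assms(4) by (intro tendsto_intros summable_LIMSEQ assms(3)) auto
  then show ?thesis
    unfolding sums_def wz_partial_sum_shift[where F = F and G = G and r = r, OF assms(1,2), of _ M]
    by simp
qed

section \<open>A WZ pair\<close>

definition hterm :: "nat \<Rightarrow> real \<Rightarrow> nat \<Rightarrow> real" where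
  "hterm m x k = pochhammer (real m + 1/2) k * pochhammer (1/2 + x) k * pochhammer (1/2 - x) k
     / (fact k * pochhammer (real m + 1 - x) k * pochhammer (real m + 1 + x) k)"

definition hterm_ratio :: "nat \<Rightarrow> real \<Rightarrow> nat \<Rightarrow> real" where
  "hterm_ratio m x k = (real m + 1/2 + k) * (1/2 + x + k) * (1/2 - x + k)
     / ((k + 1) * (real m + 1 - x + k) * (real m + 1 + x + k))"

definition wz_F :: "nat \<Rightarrow> real \<Rightarrow> nat \<Rightarrow> real" where
  "wz_F m x k = (-1)^k * ((real m + 1/2 + 2 * real k) / (real m + 1/2)) * hterm m x k"

definition wz_G :: "nat \<Rightarrow> real \<Rightarrow> nat \<Rightarrow> real" where
  "wz_G m x k = - (real k / (real m + 1/2)) * (-1)^k * hterm m x k"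

definition wz_factor :: "nat \<Rightarrow> real \<Rightarrow> real" where
  "wz_factor m x = (real m + 3/2) * (real m + 1/2) / ((real m + 1 - x) * (real m + 1 + x))"

lemma hterm_0 [simp]: "hterm m x 0 = 1"
  by (simp add: hterm_def)

lemma hterm_Suc:
  assumes "\<bar>x\<bar> < 1"
  shows "hterm m x (Suc k) = hterm m x k * hterm_ratio m x k"
proof -
  have "0 < pochhammer (real m + 1 - x) k" "0 < pochhammer (real m + 1 + x) k"
    "0 < real m + 1 - x + k" "0 < real m + 1 + x + k"
    using assms by (auto intro!: pochhammer_pos)
  then show ?thesis
    unfolding hterm_def hterm_ratio_def pochhammer_Suc fact_Suc by (simp add: field_simps)
qed

lemma hterm_Suc_param:
  assumes "\<bar>x\<bar> < 1"
  shows "hterm (Suc m) x k = hterm m x k * ((real m + 1/2 + k) / (real m + 1/2))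
          * ((real m + 1 - x) * (real m + 1 + x) / ((real m + 1 - x + k) * (real m + 1 + x + k)))"
proof -
  have pos: "0 < pochhammer (real m + 1 - x) k" "0 < pochhammer (real m + 1 + x) k"
    "0 < real m + 1 - x" "0 < real m + 1 + x" "0 < real m + 1 - x + k" "0 < real m + 1 + x + k"
    using assms by (auto intro!: pochhammer_pos)
  have shift: "pochhammer (real m + c + 1) k = pochhammer (real m + c) k * (real m + c + k) / (real m + c)"
    if "real m + c \<noteq> 0" for c
    using pochhammer_plus_one[OF that, of k] by simp
  have e1: "pochhammer (real (Suc m) + 1/2) k
      = pochhammer (real m + 1/2) k * (real m + 1/2 + k) / (real m + 1/2)"
    using shift[of "1/2"] by (simp add: add_ac)
  have e2: "pochhammer (real (Suc m) + 1 - x) k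
      = pochhammer (real m + 1 - x) k * (real m + 1 - x + k) / (real m + 1 - x)"
    using shift[of "1 - x"] pos by (simp add: algebra_simps)
  have e3: "pochhammer (real (Suc m) + 1 + x) k
      = pochhammer (real m + 1 + x) k * (real m + 1 + x + k) / (real m + 1 + x)"
    using shift[of "1 + x"] pos by (simp add: algebra_simps)
  show ?thesis
    unfolding hterm_def e1 e2 e3 using pos by (simp add: field_simps)
qed

\<comment> \<open>What remains of \<open>wz_pair\<close> after dividing by \<open>(-1)^k * hterm m x k\<close>, with \<open>a = m + 1/2\<close>.\<close>
lemma wz_certificate_identity:
  fixes a k x :: real
  assumes "a \<noteq> 0" "a + 1/2 - x + k \<noteq> 0" "a + 1/2 + x + k \<noteq> 0"
  shows "(a + 2 * k) / a - (a + 1 + 2 * k) * (a + k) / ((a + 1/2 - x + k) * (a + 1/2 + x + k))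
       = (a + k) * (1/2 + x + k) * (1/2 - x + k) / (a * ((a + 1/2 - x + k) * (a + 1/2 + x + k))) + k / a"
proof -
  define Q where "Q = (a + 1/2 - x + k) * (a + 1/2 + x + k)"
  have "Q \<noteq> 0"
    using assms by (simp add: Q_def)
  moreover have "(a + 2 * k) * Q - a * ((a + 1 + 2 * k) * (a + k))
      = (a + k) * (1/2 + x + k) * (1/2 - x + k) + k * Q"
    unfolding Q_def by algebra
  moreover have "A / a - C / Q = N / (a * Q) + k / a"
    if "Q \<noteq> 0" "A * Q - a * C = N + k * Q" for A C N :: real
    using that assms(1) by (simp add: field_simps)
  ultimately show ?thesis
    unfolding Q_def[symmetric] by blast
qed

lemma wz_pair:
  assumes "\<bar>x\<bar> < 1"
  shows "wz_F m x k - wz_factor m x * wz_F (Suc m) x k = wz_G m x (Suc k) - wz_G m x k"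
proof -
  define a where "a = real m + 1/2"
  define p1 where "p1 = a + 1/2 - x"
  define p2 where "p2 = a + 1/2 + x"
  define q1 where "q1 = p1 + k"
  define q2 where "q2 = p2 + k"
  define b where "b = a + 1"
  define K where "K = real k + 1"
  define se where "se = (-1)^k * hterm m x k"
  \<comment> \<open>with \<open>b\<close> and \<open>K\<close> atomic, \<open>field_simps\<close> sees that all denominators are nonzero\<close>
  have nz: "a \<noteq> 0" "b \<noteq> 0" "p1 \<noteq> 0" "p2 \<noteq> 0" "q1 \<noteq> 0" "q2 \<noteq> 0" "K \<noteq> 0"
    using assms by (auto simp: K_def a_def b_def p1_def p2_def q1_def q2_def)
  have factor: "wz_factor m x = b * a / (p1 * p2)"
    unfolding wz_factor_def a_def b_def p1_def p2_def by (simp add: algebra_simps)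
  have F_Suc: "wz_F (Suc m) x k = (-1)^k * ((a + 1 + 2 * real k) / b) * hterm (Suc m) x k"
    unfolding wz_F_def a_def b_def by (simp add: algebra_simps)
  have h_Suc_m: "hterm (Suc m) x k = hterm m x k * ((a + k) / a) * (p1 * p2 / (q1 * q2))"
    unfolding hterm_Suc_param[OF assms] a_def p1_def p2_def q1_def q2_def by (simp add: algebra_simps)
  have h_Suc_k: "hterm m x (Suc k)
      = hterm m x k * ((a + k) * (1/2 + x + k) * (1/2 - x + k) / (K * q1 * q2))"
    unfolding hterm_Suc[OF assms] hterm_ratio_def K_def a_def p1_def p2_def q1_def q2_def
    by (simp add: algebra_simps)
  have "wz_F m x k = se * ((a + 2 * real k) / a)"
    by (simp add: wz_F_def se_def a_def)
  moreover have "wz_factor m x * wz_F (Suc m) x k = se * ((a + 1 + 2 * real k) * (a + k) / (q1 * q2))"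
    unfolding factor F_Suc h_Suc_m se_def using nz by (simp add: field_simps)
  moreover have "wz_G m x (Suc k) = se * ((a + k) * (1/2 + x + k) * (1/2 - x + k) / (a * q1 * q2))"
    unfolding wz_G_def h_Suc_k se_def a_def[symmetric] of_nat_Suc K_def[symmetric] add.commute[of 1]
    using nz by (simp add: field_simps)
  moreover have "wz_G m x k = se * (- k / a)"
    by (simp add: wz_G_def se_def a_def)
  moreover have "(a + 2 * real k) / a - (a + 1 + 2 * real k) * (a + k) / (q1 * q2)
      = (a + k) * (1/2 + x + k) * (1/2 - x + k) / (a * q1 * q2) - (- k / a)"
    using wz_certificate_identity[where a = a and k = "real k" and x = x] nz
    by (simp add: q1_def q2_def p1_def p2_def mult.assoc)
  ultimately show ?thesis by (simp only: flip: right_diff_distrib)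
qed

section \<open>Summing the WZ series\<close>

definition two_x_csc_pi :: "real \<Rightarrow> real" where
  "two_x_csc_pi x = (if x = 0 then 2 / pi else 2 * x / sin (pi * x))"

lemma inverse_wallis_sine_factor:
  fixes t x :: real
  assumes "1 \<le> t" "\<bar>x\<bar> < t"
  shows "inverse (4 * t^2 / (4 * t^2 - 1) * (1 - x^2 / t^2))
       = (t + 1/2) * (t - 1/2) / ((t - x) * (t + x))"
proof -
  have "4 * t^2 - 1 = 4 * ((t + 1/2) * (t - 1/2))" "1 - x^2 / t^2 = (t - x) * (t + x) / t^2"
    using assms by (simp_all add: field_simps power2_eq_square)
  moreover have "inverse (4 * T / (4 * B) * (C / T)) = B / C" if "T \<noteq> 0" for T B C :: real
    using that by (simp add: field_simps)
  ultimately show ?thesis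
    using assms by simp
qed

lemma prod_wz_factor:
  assumes "\<bar>x\<bar> < 1"
  shows "(\<Prod>i<M. wz_factor i x)
       = inverse ((\<Prod>k=1..M. 4 * real k^2 / (4 * real k^2 - 1)) * (\<Prod>k=1..M. 1 - x^2 / real k^2))"
proof -
  have "wz_factor i x
      = inverse (4 * real (Suc i)^2 / (4 * real (Suc i)^2 - 1) * (1 - x^2 / real (Suc i)^2))" for i
    using inverse_wallis_sine_factor[of "real (Suc i)" x] assms
    by (simp add: wz_factor_def algebra_simps)
  then show ?thesis
    by (simp add: prod.atLeast1_atMost_eq flip: prod.distrib prod_inversef[unfolded comp_def])
qed

lemma prod_wz_factor_tendsto:
  assumes "\<bar>x\<bar> < 1"
  shows "(\<lambda>M. \<Prod>i<M. wz_factor i x) \<longlonglongrightarrow> two_x_csc_pi x"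
proof (cases "x = 0")
  case True
  have "(\<lambda>M. inverse ((\<Prod>k=1..M. 4 * real k^2 / (4 * real k^2 - 1)) * 1)) \<longlonglongrightarrow> inverse (pi / 2 * 1)"
    by (intro tendsto_inverse tendsto_mult wallis tendsto_const) simp
  then show ?thesis
    using True by (simp add: prod_wz_factor two_x_csc_pi_def)
next
  case False
  have "sin (pi * x) \<noteq> 0"
    using sin_pi_times_nonzero[OF assms False] .
  then have "(\<lambda>M. inverse ((\<Prod>k=1..M. 4 * real k^2 / (4 * real k^2 - 1)) * (\<Prod>k=1..M. 1 - x^2 / real k^2)))
      \<longlonglongrightarrow> inverse (pi / 2 * (sin (pi * x) / (pi * x)))"
    using False by (intro tendsto_inverse tendsto_mult wallis sin_product_formula_real') auto
  moreover have "inverse (pi / 2 * (sin (pi * x) / (pi * x))) = two_x_csc_pi x"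
    using False by (simp add: two_x_csc_pi_def field_simps)
  ultimately show ?thesis
    using assms by (simp add: prod_wz_factor)
qed

lemma hterm_ratio_nonneg: "\<bar>x\<bar> \<le> 1/2 \<Longrightarrow> 0 \<le> hterm_ratio m x k"
  unfolding hterm_ratio_def by (intro divide_nonneg_pos mult_nonneg_nonneg mult_pos_pos) auto

lemma hterm_nonneg: "\<bar>x\<bar> \<le> 1/2 \<Longrightarrow> 0 \<le> hterm m x k"
  by (induction k) (auto simp: hterm_Suc hterm_ratio_nonneg)

lemma hterm_ratio_le:
  assumes "\<bar>x\<bar> \<le> 1/2"
  shows "hterm_ratio m x k \<le> (real k + 1/2)^2 / ((real k + 1) * (real m + real k + 3/2))"
proof -
  have x2: "x^2 \<le> 1/4"
    using square_le_quarter[OF assms] .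
  have "hterm_ratio m x k = (real m + k + 1/2) * ((real k + 1/2)^2 - x^2)
      / ((real k + 1) * ((real m + k + 1)^2 - x^2))"
    unfolding hterm_ratio_def by (simp add: algebra_simps power2_eq_square)
  also have "\<dots> \<le> (real m + k + 1/2) * (real k + 1/2)^2
      / ((real k + 1) * ((real m + k + 1/2) * (real m + k + 3/2)))"
    using x2 by (intro frac_le mult_left_mono mult_pos_pos) (auto simp: algebra_simps power2_eq_square)
  also have "\<dots> = (real k + 1/2)^2 / ((real k + 1) * (real m + real k + 3/2))"
  proof -
    have "c * A / (B * (c * D)) = A / (B * D)" if "c \<noteq> 0" for c A B D :: real
      using that by simp
    then show ?thesis by simp
  qed
  finally show ?thesis .
qed

definition half_poch_fact :: "nat \<Rightarrow> real" where
  "half_poch_fact k = pochhammer (1/2) k / fact k"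

lemma half_poch_fact_Suc: "half_poch_fact (Suc k) = half_poch_fact k * ((real k + 1/2) / (real k + 1))"
  unfolding half_poch_fact_def pochhammer_Suc fact_Suc by (simp add: field_simps)

lemma half_poch_fact_nonneg: "0 \<le> half_poch_fact k"
  unfolding half_poch_fact_def by (intro divide_nonneg_pos pochhammer_nonneg) auto

lemma half_poch_fact_square_le: "half_poch_fact k ^ 2 \<le> 1 / (2 * real k + 1)"
proof (induction k)
  case (Suc k)
  define u v where "u = real k + 1/2" and "v = real k + 1"
  have pos: "0 < u" "0 < v"
    by (simp_all add: u_def v_def)
  have "half_poch_fact (Suc k) ^ 2 = half_poch_fact k ^ 2 * (u / v)^2"
    by (simp only: half_poch_fact_Suc power_mult_distrib u_def v_def)
  also have "\<dots> \<le> 1 / (2 * u) * (u / v)^2"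
    using Suc by (intro mult_right_mono) (simp_all add: u_def)
  also have "\<dots> = u / (2 * v^2)"
    using pos by (simp add: field_simps power2_eq_square)
  also have "\<dots> \<le> 1 / (2 * real (Suc k) + 1)"
  proof -
    have "u * (2 * real (Suc k) + 1) \<le> 2 * v^2"
      by (simp add: u_def v_def algebra_simps power2_eq_square)
    then show ?thesis
      using pos by (simp add: divide_simps)
  qed
  finally show ?case .
qed (simp add: half_poch_fact_def)

lemma half_poch_fact_tendsto_0: "half_poch_fact \<longlonglongrightarrow> 0"
proof -
  have "(\<lambda>k. half_poch_fact k ^ 2) \<longlonglongrightarrow> 0"
  proof (rule Lim_null_comparison)
    show "\<forall>\<^sub>F k in sequentially. norm (half_poch_fact k ^ 2) \<le> 1 / (2 * real k + 1)"
      using half_poch_fact_square_le by simp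
  qed real_asymp
  then have "(\<lambda>k. sqrt (half_poch_fact k ^ 2)) \<longlonglongrightarrow> sqrt 0"
    by (rule tendsto_real_sqrt)
  then show ?thesis
    using half_poch_fact_nonneg by simp
qed

lemma hterm_le_half_poch_fact:
  assumes "\<bar>x\<bar> \<le> 1/2"
  shows "hterm m x k \<le> half_poch_fact k / (2 * real k + 1)"
proof (induction k)
  case (Suc k)
  define u v w where "u = real k + 1/2" and "v = real k + 1" and "w = real k + 3/2"
  have pos: "0 < u" "0 < v" "0 < w"
    by (simp_all add: u_def v_def w_def)
  have ratio: "hterm_ratio m x k \<le> u^2 / (v * w)"
    unfolding u_def v_def w_def using hterm_ratio_le[OF assms, of m k]
    by (rule order_trans) (intro divide_left_mono mult_left_mono mult_pos_pos; simp)
  have "hterm m x (Suc k) = hterm m x k * hterm_ratio m x k"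
    using assms by (simp add: hterm_Suc)
  also have "\<dots> \<le> half_poch_fact k / (2 * u) * (u^2 / (v * w))"
    using Suc ratio hterm_ratio_nonneg[OF assms] half_poch_fact_nonneg
    by (intro mult_mono) (auto simp: u_def)
  also have "\<dots> = half_poch_fact k * (u / v) / (2 * w)"
    using pos by (simp add: field_simps power2_eq_square)
  also have "\<dots> = half_poch_fact (Suc k) / (2 * real (Suc k) + 1)"
    by (simp add: half_poch_fact_Suc u_def v_def w_def algebra_simps)
  finally show ?case .
qed (simp add: half_poch_fact_def)

lemma wz_G_tendsto_0:
  assumes "\<bar>x\<bar> \<le> 1/2"
  shows "(\<lambda>N. wz_G m x N) \<longlonglongrightarrow> 0"
proof (rule Lim_null_comparison)
  show "\<forall>\<^sub>F N in sequentially. norm (wz_G m x N) \<le> half_poch_fact N"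
  proof (intro always_eventually allI)
    fix N
    have "norm (wz_G m x N) = real N / (real m + 1/2) * hterm m x N"
      using hterm_nonneg[OF assms] by (simp add: wz_G_def abs_mult)
    also have "\<dots> \<le> 2 * real N * (half_poch_fact N / (2 * real N + 1))"
      using hterm_nonneg[OF assms] hterm_le_half_poch_fact[OF assms]
      by (intro mult_mono) (auto simp: field_simps)
    also have "\<dots> \<le> half_poch_fact N"
      using half_poch_fact_nonneg[of N] by (simp add: field_simps)
    finally show "norm (wz_G m x N) \<le> half_poch_fact N" .
  qed
qed (rule half_poch_fact_tendsto_0)

lemma hterm_ratio_le_of_ge_2:
  assumes "\<bar>x\<bar> \<le> 1/2" "2 \<le> m"
  shows "hterm_ratio m x k \<le> (real k + 1) / (real k + 4)"
proof -
  have "hterm_ratio m x k \<le> (real k + 1/2)^2 / ((real k + 1) * (real m + real k + 3/2))"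
    by (rule hterm_ratio_le[OF assms(1)])
  also have "\<dots> \<le> (real k + 1/2)^2 / ((real k + 1) * (real k + 7/2))"
    using assms(2) by (intro divide_left_mono mult_left_mono mult_pos_pos) auto
  also have "\<dots> \<le> (real k + 1) / (real k + 4)"
  proof -
    have "(real k + 1) * ((real k + 1) * (real k + 7/2)) - (real k + 1/2)^2 * (real k + 4)
        = 5/2 + 15/4 * real k + 1/2 * real k ^ 2"
      by algebra
    moreover have "0 \<le> 5/2 + 15/4 * real k + 1/2 * real k ^ 2"
      by simp
    ultimately have "(real k + 1/2)^2 * (real k + 4) \<le> (real k + 1) * ((real k + 1) * (real k + 7/2))"
      by linarith
    then show ?thesis
      by (intro divide_le_divide_cross) auto
  qed
  finally show ?thesis .
qed

lemma hterm_Suc_le_of_ge_2: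
  assumes "\<bar>x\<bar> \<le> 1/2" "2 \<le> m"
  shows "hterm m x (Suc j) \<le> 12 / ((real m + 1) * (real j + 2) * (real j + 3) * (real j + 4))"
proof (induction j)
  case 0
  have "hterm m x 1 = hterm_ratio m x 0"
    using assms(1) by (simp add: hterm_Suc[of x m 0, simplified])
  also have "\<dots> \<le> (1/2)^2 / (1 * (real m + 3/2))"
    using hterm_ratio_le[OF assms(1), of m 0] by simp
  also have "\<dots> \<le> 12 / ((real m + 1) * (real 0 + 2) * (real 0 + 3) * (real 0 + 4))"
    by (simp add: divide_simps)
  finally show ?case by simp
next
  case (Suc j)
  have "hterm m x (Suc (Suc j)) = hterm m x (Suc j) * hterm_ratio m x (Suc j)"
    using assms(1) by (simp add: hterm_Suc)
  also have "\<dots> \<le> 12 / ((real m + 1) * (real j + 2) * (real j + 3) * (real j + 4))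
      * ((real (Suc j) + 1) / (real (Suc j) + 4))"
    by (rule mult_mono[OF Suc hterm_ratio_le_of_ge_2[OF assms]])
      (simp_all add: hterm_nonneg[OF assms(1)] hterm_ratio_nonneg[OF assms(1)])
  also have "\<dots> = 12 / ((real m + 1) * (real (Suc j) + 2) * (real (Suc j) + 3) * (real (Suc j) + 4))"
  proof -
    have cancel: "A / (M * P * Q * R) * (P / S) = A / (M * Q * R * S)" if "P \<noteq> 0" for A M P Q R S :: real
      using that by simp
    have "real (Suc j) + 1 = real j + 2" "real (Suc j) + 2 = real j + 3"
      "real (Suc j) + 3 = real j + 4" "real (Suc j) + 4 = real j + 5"
      by simp_all
    then show ?thesis
      by (simp only:) (rule cancel, simp)
  qed
  finally show ?case .
qed

lemma wz_F_Suc_abs_le_of_ge_2: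
  assumes "\<bar>x\<bar> \<le> 1/2" "2 \<le> m"
  shows "\<bar>wz_F m x (Suc j)\<bar> \<le> 24 / (real m + 1) * (1 / (real j + 1)^2)"
proof -
  have m: "1 \<le> real m + 1/2"
    using assms by simp
  have "\<bar>wz_F m x (Suc j)\<bar> = (real m + 1/2 + 2 * real (Suc j)) / (real m + 1/2) * hterm m x (Suc j)"
    unfolding wz_F_def using hterm_nonneg[OF assms(1)] m by (simp add: abs_mult)
  also have "\<dots> \<le> (1 + 2 * real (Suc j)) * (12 / ((real m + 1) * (real j + 2) * (real j + 3) * (real j + 4)))"
  proof (rule mult_mono[OF _ hterm_Suc_le_of_ge_2[OF assms]])
    have "2 * real (Suc j) * 1 \<le> 2 * real (Suc j) * (real m + 1/2)"
      using m by (intro mult_left_mono) auto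
    then have "2 * real (Suc j) / (real m + 1/2) \<le> 2 * real (Suc j)"
      using m by (simp add: divide_le_eq)
    moreover have "(real m + 1/2 + 2 * real (Suc j)) / (real m + 1/2) = 1 + 2 * real (Suc j) / (real m + 1/2)"
      using m by (simp add: field_simps)
    ultimately show "(real m + 1/2 + 2 * real (Suc j)) / (real m + 1/2) \<le> 1 + 2 * real (Suc j)"
      by simp
  qed (use hterm_nonneg[OF assms(1)] in auto)
  also have "\<dots> = (12 * (2 * real j + 3) / ((real j + 2) * (real j + 3) * (real j + 4))) / (real m + 1)"
    by (simp add: divide_simps)
  also have "\<dots> \<le> (24 / (real j + 1)^2) / (real m + 1)"
  proof (intro divide_right_mono)
    have "24 * ((real j + 2) * (real j + 3) * (real j + 4)) - 12 * (2 * real j + 3) * (real j + 1)^2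
        = 540 + 528 * real j + 132 * real j ^ 2"
      by algebra
    moreover have "0 \<le> 540 + 528 * real j + 132 * real j ^ 2"
      by simp
    ultimately have "12 * (2 * real j + 3) * (real j + 1)^2 \<le> 24 * ((real j + 2) * (real j + 3) * (real j + 4))"
      by linarith
    then show "12 * (2 * real j + 3) / ((real j + 2) * (real j + 3) * (real j + 4)) \<le> 24 / (real j + 1)^2"
      by (simp add: divide_simps)
  qed simp
  finally show ?thesis
    by (simp add: ac_simps)
qed

lemma wz_F_summable_near_1:
  assumes "\<bar>x\<bar> \<le> 1/2" "2 \<le> m"
  shows "summable (wz_F m x)" "\<bar>suminf (wz_F m x) - 1\<bar> \<le> 4 * pi^2 / (real m + 1)"
proof -
  define g where "g j = 24 / (real m + 1) / (real j + 1)^2" for j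
  have g_sums: "g sums (24 / (real m + 1) * pi^2 / 6)"
    unfolding g_def by (rule inverse_squares_sums')
  have bound: "norm (wz_F m x (Suc j)) \<le> g j" for j
    unfolding g_def using wz_F_Suc_abs_le_of_ge_2[OF assms] by simp
  have tail: "summable (\<lambda>j. norm (wz_F m x (Suc j)))"
    by (rule summable_comparison_test'[OF sums_summable[OF g_sums]]) (use bound in simp)
  then show summable: "summable (wz_F m x)"
    using summable_norm_cancel summable_Suc_iff by blast
  have "suminf (wz_F m x) - 1 = (\<Sum>j. wz_F m x (Suc j))"
    using suminf_split_head[OF summable] by (simp add: wz_F_def)
  also have "\<bar>\<dots>\<bar> \<le> (\<Sum>j. norm (wz_F m x (Suc j)))"
    using summable_norm[OF tail] unfolding real_norm_def .
  also have "\<dots> \<le> suminf g"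
    using bound tail sums_summable[OF g_sums] by (rule suminf_le)
  also have "\<dots> = 4 * pi^2 / (real m + 1)"
    using sums_unique[OF g_sums] by (simp add: field_simps)
  finally show "\<bar>suminf (wz_F m x) - 1\<bar> \<le> 4 * pi^2 / (real m + 1)" .
qed

lemma suminf_wz_F_tendsto_1:
  assumes "\<bar>x\<bar> \<le> 1/2"
  shows "(\<lambda>m. suminf (wz_F m x)) \<longlonglongrightarrow> 1"
proof -
  have "(\<lambda>m. suminf (wz_F m x) - 1) \<longlonglongrightarrow> 0"
  proof (rule Lim_null_comparison)
    show "\<forall>\<^sub>F m in sequentially. norm (suminf (wz_F m x) - 1) \<le> 4 * pi^2 / (real m + 1)"
      using eventually_ge_at_top[of 2]
      by eventually_elim (use wz_F_summable_near_1(2)[OF assms] in auto)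
  qed real_asymp
  then show ?thesis
    by (simp add: LIM_zero_iff)
qed

lemma wz_F_0_sums:
  assumes "\<bar>x\<bar> \<le> 1/2"
  shows "wz_F 0 x sums two_x_csc_pi x"
proof -
  have x: "\<bar>x\<bar> < 1"
    using assms by simp
  have sums_M: "wz_F 0 x sums ((\<Prod>i<M. wz_factor i x) * suminf (wz_F M x))" if "2 \<le> M" for M
    by (rule wz_sums[where F = "\<lambda>m. wz_F m x" and G = "\<lambda>m. wz_G m x" and r = "\<lambda>m. wz_factor m x"])
      (use wz_pair[OF x] wz_F_summable_near_1(1)[OF assms that] wz_G_tendsto_0[OF assms]
        in \<open>auto simp: wz_G_def\<close>)
  have lim: "(\<lambda>M. (\<Prod>i<M. wz_factor i x) * suminf (wz_F M x)) \<longlonglongrightarrow> two_x_csc_pi x * 1"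
    using x by (intro tendsto_mult prod_wz_factor_tendsto suminf_wz_F_tendsto_1 assms)
  have ev: "\<forall>\<^sub>F M in sequentially. (\<Prod>i<M. wz_factor i x) * suminf (wz_F M x) = suminf (wz_F 0 x)"
    using eventually_ge_at_top[of 2] by eventually_elim (erule sums_unique[OF sums_M])
  have "(\<lambda>M. suminf (wz_F 0 x)) \<longlonglongrightarrow> two_x_csc_pi x * 1"
    using lim by (subst (asm) tendsto_cong[OF ev])
  then have "suminf (wz_F 0 x) = two_x_csc_pi x"
    by (simp add: LIMSEQ_const_iff)
  moreover have "summable (wz_F 0 x)"
    using sums_M[OF order.refl] by (rule sums_summable)
  ultimately show ?thesis
    by (metis summable_sums)
qed

section \<open>The coefficient of \<open>x\<^sup>2\<close>\<close>

definition bauer_coeff :: "nat \<Rightarrow> real" where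
  "bauer_coeff k = (-1)^k * (4 * real k + 1) * pochhammer (1/2) k ^ 3 / fact k ^ 3"

lemma wz_F_0_0: "wz_F 0 0 = bauer_coeff"
  by (rule ext) (simp add: bauer_coeff_def wz_F_def hterm_def pochhammer_fact[symmetric]
      power3_eq_cube field_simps)

lemma bauer_coeff_sums: "bauer_coeff sums (2 / pi)"
  using wz_F_0_sums[of 0] by (simp add: wz_F_0_0 two_x_csc_pi_def)

definition ratio_defect :: "real \<Rightarrow> nat \<Rightarrow> real" where
  "ratio_defect x k = - (real k + 3/4) / ((real k + 1/2)^2 * ((real k + 1)^2 - x^2))"

definition rel_term :: "real \<Rightarrow> nat \<Rightarrow> real" where
  "rel_term x k = (\<Prod>j<k. 1 + x^2 * ratio_defect x j)"

lemma rel_term_0 [simp]: "rel_term 0 k = 1"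
  by (simp add: rel_term_def)

lemma rel_term_Suc_diff: "rel_term x (Suc k) - rel_term x k = x^2 * (rel_term x k * ratio_defect x k)"
  by (simp add: rel_term_def algebra_simps)

lemma hterm_ratio_0_eq:
  assumes "\<bar>x\<bar> \<le> 1/2"
  shows "hterm_ratio 0 x k = hterm_ratio 0 0 k * (1 + x^2 * ratio_defect x k)"
proof -
  define c where "c = real k + 1/2"
  define d where "d = real k + 1"
  define A where "A = c^2"
  define B where "B = d^2"
  have nz: "A \<noteq> 0" "B \<noteq> 0" "B - x^2 \<noteq> 0" "c \<noteq> 0" "d \<noteq> 0"
    using square_lt_succ_square[OF assms, of k] by (auto simp: A_def B_def c_def d_def)
  \<comment> \<open>\<open>(k+1)\<^sup>2 - (k+1/2)\<^sup>2 = k + 3/4\<close>\<close>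
  have rd: "ratio_defect x k = - (B - A) / (A * (B - x^2))"
    unfolding ratio_defect_def A_def B_def c_def d_def by (simp add: algebra_simps power2_eq_square)
  have hr: "hterm_ratio 0 y k = c * (A - y^2) / (d * (B - y^2))" for y
    unfolding hterm_ratio_def A_def B_def c_def d_def by (simp add: algebra_simps power2_eq_square)
  show ?thesis
    unfolding rd hr using nz by (simp add: field_simps)
qed

lemma hterm_0_eq:
  assumes "\<bar>x\<bar> \<le> 1/2"
  shows "hterm 0 x k = hterm 0 0 k * rel_term x k"
proof (induction k)
  case (Suc k)
  have "\<bar>x\<bar> < 1" using assms by simp
  then have "hterm 0 x (Suc k) = hterm 0 x k * hterm_ratio 0 x k"
    by (rule hterm_Suc)
  also have "\<dots> = hterm 0 0 k * hterm_ratio 0 0 k * (rel_term x k * (1 + x^2 * ratio_defect x k))"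
    by (simp add: Suc hterm_ratio_0_eq[OF assms])
  also have "\<dots> = hterm 0 0 (Suc k) * rel_term x (Suc k)"
    by (simp add: hterm_Suc rel_term_def)
  finally show ?case .
qed (simp add: rel_term_def)

lemma wz_F_0_eq:
  assumes "\<bar>x\<bar> \<le> 1/2"
  shows "wz_F 0 x k = bauer_coeff k * rel_term x k"
  using hterm_0_eq[OF assms, of k] by (simp add: wz_F_0_0[symmetric] wz_F_def)

lemma ratio_defect_nonpos: "\<bar>x\<bar> \<le> 1/2 \<Longrightarrow> ratio_defect x k \<le> 0"
  unfolding ratio_defect_def using square_lt_succ_square[of x k]
  by (intro divide_nonpos_pos) auto

lemma rel_term_bounds:
  assumes "\<bar>x\<bar> \<le> 1/2"
  shows "0 \<le> rel_term x k" "rel_term x k \<le> 1"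
proof -
  have "0 \<le> 1 + x^2 * ratio_defect x j" for j
  proof -
    have "0 < hterm_ratio 0 0 j"
      unfolding hterm_ratio_def by (intro divide_pos_pos mult_pos_pos) auto
    moreover have "0 \<le> hterm_ratio 0 x j"
      using hterm_ratio_nonneg[OF assms] .
    ultimately show ?thesis
      by (simp add: hterm_ratio_0_eq[OF assms] zero_le_mult_iff)
  qed
  moreover have "1 + x^2 * ratio_defect x j \<le> 1" for j
    using ratio_defect_nonpos[OF assms, of j] by (simp add: mult_nonneg_nonpos)
  ultimately show "0 \<le> rel_term x k" "rel_term x k \<le> 1"
    unfolding rel_term_def by (auto intro: prod_nonneg prod_le_1)
qed

lemma ratio_defect_abs_le:
  assumes "\<bar>x\<bar> \<le> 1/2"
  shows "\<bar>ratio_defect x k\<bar> \<le> 6 / (real k + 1)^2"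
proof -
  define t where "t = real k"
  have t0: "0 \<le> t"
    by (simp add: t_def)
  have "(t + 1)^2 - x^2 - (t + 1/2) * (t + 3/2) = 1/4 - x^2"
    by algebra
  then have den: "(t + 1/2) * (t + 3/2) \<le> (t + 1)^2 - x^2"
    using square_le_quarter[OF assms] by linarith
  have pos: "0 < (t + 1/2)^2 * ((t + 1/2) * (t + 3/2))"
    using t0 by simp
  have "0 < (t + 1/2) * (t + 3/2)"
    using t0 by simp
  with den have "0 < (t + 1)^2 - x^2"
    by linarith
  then have D: "0 < (t + 1/2)^2 * ((t + 1)^2 - x^2)"
    using t0 by simp
  then have "\<bar>ratio_defect x k\<bar> = (t + 3/4) / ((t + 1/2)^2 * ((t + 1)^2 - x^2))"
    unfolding ratio_defect_def t_def[symmetric] using t0 by (simp add: abs_div)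
  also have "\<dots> \<le> (t + 3/4) / ((t + 1/2)^2 * ((t + 1/2) * (t + 3/2)))"
  proof (rule divide_left_mono)
    show "(t + 1/2)^2 * ((t + 1/2) * (t + 3/2)) \<le> (t + 1/2)^2 * ((t + 1)^2 - x^2)"
      using den by (rule mult_left_mono) simp
    show "0 < (t + 1/2)^2 * ((t + 1)^2 - x^2) * ((t + 1/2)^2 * ((t + 1/2) * (t + 3/2)))"
      using D pos by (rule mult_pos_pos)
  qed (use t0 in simp)
  also have "\<dots> \<le> 6 / (t + 1)^2"
  proof -
    have "0 \<le> 6 * t^4 + 17 * t^3 + 61/4 * t^2 + 5 * t + 3/8"
      using t0 by simp
    moreover have "6 * ((t + 1/2)^2 * ((t + 1/2) * (t + 3/2))) - (t + 3/4) * (t + 1)^2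
        = 6 * t^4 + 17 * t^3 + 61/4 * t^2 + 5 * t + 3/8"
      by algebra
    ultimately have "(t + 3/4) * (t + 1)^2 \<le> 6 * ((t + 1/2)^2 * ((t + 1/2) * (t + 3/2)))"
      by linarith
    then show ?thesis
      using pos t0 by (intro divide_le_divide_cross) auto
  qed
  finally show ?thesis
    by (simp add: t_def)
qed

definition bauer_tail :: "nat \<Rightarrow> real" where
  "bauer_tail k = 2 / pi - (\<Sum>j<k. bauer_coeff j)"

lemma bauer_coeff_eq_tail_diff: "bauer_coeff k = bauer_tail k - bauer_tail (Suc k)"
  by (simp add: bauer_tail_def)

lemma bauer_tail_tendsto_0: "bauer_tail \<longlonglongrightarrow> 0"
proof -
  have "(\<lambda>k. 2 / pi - (\<Sum>j<k. bauer_coeff j)) \<longlonglongrightarrow> 2 / pi - 2 / pi"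
    using bauer_coeff_sums unfolding sums_def by (intro tendsto_diff tendsto_const)
  then show ?thesis
    by (simp add: bauer_tail_def[abs_def])
qed

\<comment> \<open>By \<open>two_x_csc_pi_eq\<close> below, \<open>quad_quot x = (two_x_csc_pi x - 2 / pi) / x\<^sup>2\<close> for \<open>x \<noteq> 0\<close>.\<close>
definition quad_quot :: "real \<Rightarrow> real" where
  "quad_quot x = (\<Sum>k. bauer_tail (Suc k) * rel_term x k * ratio_defect x k)"

lemma quad_quot_term_bound:
  obtains B where "\<And>k x. \<bar>x\<bar> \<le> 1/2
    \<Longrightarrow> norm (bauer_tail (Suc k) * rel_term x k * ratio_defect x k) \<le> B / (real k + 1)^2"
proof -
  obtain C where C: "0 < C" "\<And>k. norm (bauer_tail k) \<le> C"
    using convergent_imp_Bseq[OF convergentI[OF bauer_tail_tendsto_0]] by (auto elim: BseqE)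
  have "norm (bauer_tail (Suc k) * rel_term x k * ratio_defect x k) \<le> C * 1 * (6 / (real k + 1)^2)"
    if "\<bar>x\<bar> \<le> 1/2" for k x
    unfolding norm_mult using C rel_term_bounds[OF that, of k] ratio_defect_abs_le[OF that, of k]
    by (intro mult_mono) auto
  then show ?thesis
    by (intro that[of "C * 6"]) simp
qed

lemma quad_quot_summable:
  assumes "\<bar>x\<bar> \<le> 1/2"
  shows "summable (\<lambda>k. bauer_tail (Suc k) * rel_term x k * ratio_defect x k)"
proof -
  obtain B where "\<And>k. norm (bauer_tail (Suc k) * rel_term x k * ratio_defect x k) \<le> B / (real k + 1)^2"
    using quad_quot_term_bound assms by metis
  then show ?thesis
    by (intro summable_comparison_test'[OF summable_inverse_squares])
qed

lemma two_x_csc_pi_eq: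
  assumes "\<bar>x\<bar> \<le> 1/2"
  shows "two_x_csc_pi x = 2 / pi + x^2 * quad_quot x"
proof -
  have "Bseq (rel_term x)"
    using rel_term_bounds[OF assms] by (intro BseqI[of 1]) auto
  then have "(\<lambda>k. (bauer_tail k - bauer_tail (Suc k)) * rel_term x k)
      sums (bauer_tail 0 * rel_term x 0 + (\<Sum>k. bauer_tail (Suc k) * (rel_term x (Suc k) - rel_term x k)))"
    using summable_mult[OF quad_quot_summable[OF assms], of "x^2"]
    by (intro sums_by_parts bauer_tail_tendsto_0) (simp_all add: rel_term_Suc_diff mult_ac)
  moreover have "(\<Sum>k. bauer_tail (Suc k) * (rel_term x (Suc k) - rel_term x k)) = x^2 * quad_quot x"
    unfolding quad_quot_def rel_term_Suc_diff
    using suminf_mult[OF quad_quot_summable[OF assms], of "x^2"] by (simp add: mult_ac)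
  moreover have "wz_F 0 x = (\<lambda>k. (bauer_tail k - bauer_tail (Suc k)) * rel_term x k)"
    by (rule ext) (simp add: wz_F_0_eq[OF assms] bauer_coeff_eq_tail_diff)
  ultimately have "wz_F 0 x sums (2 / pi + x^2 * quad_quot x)"
    by (simp add: bauer_tail_def rel_term_def)
  then show ?thesis
    using sums_unique2[OF wz_F_0_sums[OF assms]] by simp
qed

lemma isCont_quad_quot_0: "isCont quad_quot 0"
proof -
  obtain B where B: "\<And>k x. \<bar>x\<bar> \<le> 1/2
      \<Longrightarrow> norm (bauer_tail (Suc k) * rel_term x k * ratio_defect x k) \<le> B / (real k + 1)^2"
    using quad_quot_term_bound by blast
  have nz: "(real j + 1/2)^2 * ((real j + 1)^2 - x^2) \<noteq> 0" if "x \<in> ball 0 (1/2)" for x :: real and j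
    using square_lt_succ_square[of x j] that by (simp add: dist_real_def)
  have "continuous_on (ball 0 (1/2)) (\<lambda>x. bauer_tail (Suc k) * rel_term x k * ratio_defect x k)" for k
    unfolding rel_term_def ratio_defect_def by (intro continuous_intros) (use nz in auto)
  then have "continuous_on (ball 0 (1/2)) quad_quot"
    unfolding quad_quot_def
    by (rule continuous_on_suminf_dominated[OF _ _ summable_inverse_squares[of B]])
      (use B in \<open>auto simp: dist_real_def\<close>)
  then show ?thesis
    by (simp add: continuous_on_eq_continuous_at)
qed

lemma quad_quot_0: "quad_quot 0 = pi / 3"
proof -
  have "quad_quot x = 2 * pi * ((pi * x / sin (pi * x) - 1) / (pi * x)^2)"
    if "x \<noteq> 0" "dist x 0 < 1/2" for x :: real
  proof -
    have x: "\<bar>x\<bar> \<le> 1/2" "sin (pi * x) \<noteq> 0"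
      using that sin_pi_times_nonzero[of x] by (auto simp: dist_real_def)
    then have "quad_quot x = (2 * x / sin (pi * x) - 2 / pi) / x^2"
      using two_x_csc_pi_eq[of x] that(1) by (simp add: two_x_csc_pi_def field_simps)
    also have "\<dots> = 2 * pi * ((pi * x / sin (pi * x) - 1) / (pi * x)^2)"
      using x that(1) by (simp add: field_simps power2_eq_square)
    finally show ?thesis .
  qed
  then have "\<forall>\<^sub>F x in at 0. quad_quot x = 2 * pi * ((pi * x / sin (pi * x) - 1) / (pi * x)^2)"
    unfolding eventually_at by (intro exI[of _ "1/2"]) auto
  moreover have "((\<lambda>x::real. 2 * pi * ((pi * x / sin (pi * x) - 1) / (pi * x)^2)) \<longlongrightarrow> 2 * pi * (1/6)) (at 0)"
  proof -
    have "((\<lambda>y::real. (y / sin y - 1) / y^2) \<longlongrightarrow> 1/6) (at 0)"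
      by real_asymp
    moreover have "filterlim (\<lambda>x::real. pi * x) (at 0) (at 0)"
      by real_asymp
    ultimately show ?thesis
      by (intro tendsto_mult_left) (rule filterlim_compose[unfolded o_def])
  qed
  ultimately have "(quad_quot \<longlongrightarrow> pi / 3) (at 0)"
    by (simp add: tendsto_cong)
  moreover have "(quad_quot \<longlongrightarrow> quad_quot 0) (at 0)"
    using isCont_quad_quot_0 by (simp add: isCont_def)
  ultimately show ?thesis
    using LIM_unique by metis
qed

lemma ratio_defect_0: "ratio_defect 0 k = 4 * (1 / (2 * real k + 2)^2 - 1 / (2 * real k + 1)^2)"
proof -
  have nz: "(2 * real k + 2)^2 \<noteq> 0" "(2 * real k + 1)^2 \<noteq> 0" "(real k + 1/2)^2 * (real k + 1)^2 \<noteq> 0"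
    by simp_all
  have "4 * (1 / (2 * real k + 2)^2 - 1 / (2 * real k + 1)^2)
      = 4 * ((2 * real k + 1)^2 - (2 * real k + 2)^2) / ((2 * real k + 2)^2 * (2 * real k + 1)^2)"
    using nz by (simp add: diff_frac_eq)
  also have "\<dots> = - (real k + 3/4) / ((real k + 1/2)^2 * (real k + 1)^2)"
    using nz by (subst frac_eq_eq) (simp_all, algebra)
  finally show ?thesis
    by (simp add: ratio_defect_def)
qed

lemma sum_ratio_defect_0: "(\<Sum>j<k. ratio_defect 0 j) = 4 * (\<Sum>i=1..2*k. (-1)^i / (real i)^2)"
proof (induction k)
  case (Suc k)
  have "(\<Sum>i=1..2 * Suc k. (-1::real)^i / (real i)^2)
      = (\<Sum>i=1..2*k. (-1)^i / (real i)^2) + (1 / (2 * real k + 2)^2 - 1 / (2 * real k + 1)^2)"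
    by (simp add: algebra_simps)
  with Suc show ?case
    by (simp add: ratio_defect_0 algebra_simps)
qed simp

lemma bauer_coeff_times_defect_sums:
  "(\<lambda>k. bauer_coeff k * (\<Sum>j<k. ratio_defect 0 j)) sums quad_quot 0"
proof -
  have "summable (ratio_defect 0)"
    using ratio_defect_abs_le[of 0] by (intro summable_comparison_test'[OF summable_inverse_squares]) auto
  then have "Bseq (\<lambda>k. \<Sum>j<k. ratio_defect 0 j)"
    using convergent_imp_Bseq summable_iff_convergent by blast
  then show ?thesis
    using sums_by_parts[OF bauer_tail_tendsto_0, of "\<lambda>k. \<Sum>j<k. ratio_defect 0 j"] quad_quot_summable[of 0]
    by (simp add: bauer_coeff_eq_tail_diff quad_quot_def)
qed

theorem theorem1p1:
  shows "(\<lambda>n. \<Sum>k=1..n. (-1::real)^k * (4 * real k + 1)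
            * (pochhammer (1/2) k)^3 / (fact k)^3
            * (\<Sum>i=1..2*k. (-1::real)^i / (real i)^2))
         \<longlonglongrightarrow> pi / 12"
proof -
  have "(\<lambda>k. bauer_coeff k * (\<Sum>i=1..2*k. (-1::real)^i / (real i)^2)) sums (quad_quot 0 / 4)"
    using sums_divide[OF bauer_coeff_times_defect_sums, of 4] by (simp add: sum_ratio_defect_0)
  then have "(\<lambda>n. \<Sum>k\<le>n. bauer_coeff k * (\<Sum>i=1..2*k. (-1::real)^i / (real i)^2)) \<longlonglongrightarrow> pi / 12"
    by (simp add: sums_def_le quad_quot_0)
  moreover have "(\<Sum>k\<le>n. f k) = (\<Sum>k=1..n. f k)" if "f 0 = 0" for f :: "nat \<Rightarrow> real" and n
    using that by (simp add: atMost_atLeast0 sum.atLeast_Suc_atMost)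
  ultimately show ?thesis
    by (simp add: bauer_coeff_def)
qed

end
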